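(* Let $l$ be a prime number, let $\mathcal{T}_l\cong\prod_{k\in\mathbb{N}}\mathbb{Z}/l^k\mathbb{Z}$, let $A$ be a finite abelian $l$-group, and let $\mathcal{D}$ be a pro-$l$ abelian group with an exact sequence of pro-$l$ abelian groups $0\to\mathcal{T}_l\to\mathcal{D}\xrightarrow{\pi} A\to 0$ such that the topological closure of the torsion subgroup of $\mathcal{D}$ equals the image of $\mathcal{T}_l$. Let $X^{\vee}=\mathrm{Hom}_{cont}(X,\mathbb{R}/\mathbb{Z})$ denote the Pontryagin dual, and regard $A^{\vee}$ as a subgroup of $\mathcal{D}^{\vee}$ via the injection $\pi^{\vee}$. Then for every non-zero $x\in A^{\vee}$ and every natural number $n$ there exists $c_x\in\mathcal{D}^{\vee}$ with $l^n c_x=x$. *)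

theory Defs
  imports "HOL-Analysis.Analysis" "HOL-Algebra.Algebra"
begin

definition topological_group :: "('a, 'b) monoid_scheme \<Rightarrow> 'a topology \<Rightarrow> bool" where
  "topological_group G T \<longleftrightarrow> group G \<and> topspace T = carrier G \<and>
     continuous_map (prod_topology T T) T (\<lambda>p. fst p \<otimes>\<^bsub>G\<^esub> snd p) \<and>
     continuous_map T T (\<lambda>x. inv\<^bsub>G\<^esub> x)"

definition pro_l_group :: "nat \<Rightarrow> ('a, 'b) monoid_scheme \<Rightarrow> 'a topology \<Rightarrow> bool" where
  "pro_l_group l G T \<longleftrightarrow> topological_group G T \<and> compact_space T \<and> Hausdorff_space T \<and>
     (\<forall>x\<in>topspace T. connected_component_of_set T x = {x}) \<and>
     (\<forall>H. subgroup H G \<and> normal H G \<and> openin T H \<longrightarrow> (\<exists>k. card (rcosets\<^bsub>G\<^esub> H) = l ^ k))"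

definition Tl_group :: "nat \<Rightarrow> (nat \<Rightarrow> int) monoid" where
  "Tl_group l = \<lparr>carrier = PiE UNIV (\<lambda>k. {0..<int l ^ k}),
                  mult = (\<lambda>f g. \<lambda>k. (f k + g k) mod (int l ^ k)),
                  one = (\<lambda>k. 0)\<rparr>"

definition Tl_top :: "nat \<Rightarrow> (nat \<Rightarrow> int) topology" where
  "Tl_top l = product_topology (\<lambda>k. discrete_topology {0..<int l ^ k}) UNIV"

(* Continuous characters G -> R/Z, with R/Z identified with the unit circle in C
   (t mod 1 \<mapsto> exp(2 pi i t)); the dual group operation is pointwise multiplication. *)
definition continuous_character ::
  "('a, 'b) monoid_scheme \<Rightarrow> 'a topology \<Rightarrow> ('a \<Rightarrow> complex) \<Rightarrow> bool" where
  "continuous_character G T chr \<longleftrightarrow>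
     continuous_map T (top_of_set (sphere (0::complex) 1)) chr \<and>
     (\<forall>x\<in>carrier G. \<forall>y\<in>carrier G. chr (x \<otimes>\<^bsub>G\<^esub> y) = chr x * chr y)"

end

theory Submission
  imports Defs
begin

text \<open>
  Put \<open>m = l^n\<close>. The kernel \<open>\<iota>(\<T>\<^sub>l)\<close> of \<open>\<pi>\<close> is open, and the images \<open>V\<^sub>K\<close> of the subgroups
  \<open>{f. f k = 0 for k < K}\<close> of \<open>\<T>\<^sub>l\<close> form a decreasing sequence of open and closed subgroups of
  \<open>\<D>\<close> with trivial intersection. If every \<open>V\<^sub>K\<close> contained some \<open>d\<^sup>m\<close> with \<open>\<pi> d \<noteq> 1\<close>,
  compactness would give a \<open>d\<close> with \<open>d\<^sup>m = 1\<close> and \<open>\<pi> d \<noteq> 1\<close>; but torsion elements lie in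
  the closure of the torsion subgroup, which is \<open>ker \<pi>\<close>. So for some \<open>V = V\<^sub>K\<close>,
  \<open>d\<^sup>m \<in> V\<close> forces \<open>\<pi> d = 1\<close>, and \<open>d\<^sup>m v \<mapsto> x (\<pi> d)\<close> is a well-defined character of the
  subgroup \<open>\<D>\<^sup>m V\<close>. Since the circle is divisible, it extends to all of \<open>\<D>\<close> (finitely many
  translates of the open subgroup \<open>V\<close> cover \<open>\<D>\<close>, so finitely many one-step extensions
  suffice), and the extension \<open>c\<close> is continuous because it is trivial on \<open>V\<close>. Then
  \<open>c(d)\<^sup>m = c(d\<^sup>m) = x(\<pi> d)\<close>.
\<close>

definition unit_character_on :: "('a, 'b) monoid_scheme \<Rightarrow> 'a set \<Rightarrow> ('a \<Rightarrow> complex) \<Rightarrow> bool" where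
  "unit_character_on G H \<psi> \<longleftrightarrow>
     (\<forall>a\<in>H. \<forall>b\<in>H. \<psi> (a \<otimes>\<^bsub>G\<^esub> b) = \<psi> a * \<psi> b) \<and> (\<forall>a\<in>H. norm (\<psi> a) = 1)"

lemma unit_character_on_mult:
  "unit_character_on G H \<psi> \<Longrightarrow> a \<in> H \<Longrightarrow> b \<in> H \<Longrightarrow> \<psi> (a \<otimes>\<^bsub>G\<^esub> b) = \<psi> a * \<psi> b"
  unfolding unit_character_on_def by blast

lemma unit_character_on_norm: "unit_character_on G H \<psi> \<Longrightarrow> a \<in> H \<Longrightarrow> norm (\<psi> a) = 1"
  unfolding unit_character_on_def by blast

lemma unit_character_on_carrier_if_continuous_character:
  assumes "continuous_character G T \<theta>" "topspace T = carrier G"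
  shows "unit_character_on G (carrier G) \<theta>"
  using assms unfolding continuous_character_def unit_character_on_def continuous_map_def by auto

lemma (in group) subgroup_nat_pow_closed:
  "subgroup H G \<Longrightarrow> h \<in> H \<Longrightarrow> h [^] (n::nat) \<in> H"
  using subgroup_int_pow_closed[of H h "int n"] by (simp add: int_pow_int)

lemma (in group) unit_character_on_pow:
  assumes H: "subgroup H G" and \<psi>: "unit_character_on G H \<psi>" and a: "a \<in> H"
  shows "\<psi> (a [^] (q::nat)) = \<psi> a ^ q"
proof (induction q)
  case 0
  have "\<one> \<in> H" by (rule subgroup.one_closed[OF H])
  then have "\<psi> \<one> * \<psi> \<one> = \<psi> \<one> * 1" and "\<psi> \<one> \<noteq> 0"
    using unit_character_on_mult[OF \<psi>] unit_character_on_norm[OF \<psi>] by force+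
  then show ?case by simp
next
  case (Suc q)
  then show ?case
    using unit_character_on_mult[OF \<psi> subgroup_nat_pow_closed[OF H a] a] by simp
qed

lemma (in group) unit_character_on_one:
  assumes "subgroup H G" "unit_character_on G H \<psi>"
  shows "\<psi> \<one> = 1"
  using unit_character_on_pow[OF assms subgroup.one_closed[OF assms(1)], of 0] by simp

lemma unit_circle_root:
  assumes "norm (z::complex) = 1" "0 < k"
  obtains w where "norm w = 1" "w ^ k = z"
proof
  define w where "w = exp (Ln z / of_nat k)"
  have "w ^ k = exp (of_nat k * (Ln z / of_nat k))"
    unfolding w_def by (simp only: exp_of_nat_mult)
  also have "\<dots> = z" using assms by (auto intro: exp_Ln)
  finally show "w ^ k = z" .
  then have "norm w ^ k = 1" using assms by (simp add: norm_power[symmetric])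
  then show "norm w = 1" using assms power_eq_imp_eq_base[of "norm w" k 1] by simp
qed

text \<open>If \<open>k\<close> is the order of \<open>g\<close> modulo \<open>H\<close>, any \<open>k\<close>-th root of \<open>\<psi> (g [^] k)\<close> is a
  consistent value for the extended character at \<open>g\<close>.\<close>
lemma (in comm_group) unit_character_root_at_element:
  assumes H: "subgroup H G" and \<psi>: "unit_character_on G H \<psi>" and g: "g \<in> carrier G"
    and m: "0 < m" "g [^] (m::nat) \<in> H"
  obtains w where "norm w = 1" "\<And>j::nat. g [^] j \<in> H \<Longrightarrow> \<psi> (g [^] j) = w ^ j"
proof -
  define k where "k = (LEAST k::nat. 0 < k \<and> g [^] k \<in> H)"
  have k: "0 < k" "g [^] k \<in> H"
    using LeastI[of "\<lambda>k. 0 < k \<and> g [^] k \<in> H" m] m unfolding k_def by auto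
  have k_least: "g [^] r \<notin> H" if "0 < r" "r < k" for r
    using not_less_Least[of r "\<lambda>k. 0 < k \<and> g [^] k \<in> H"] that unfolding k_def by auto
  obtain w where w: "norm w = 1" "w ^ k = \<psi> (g [^] k)"
    using unit_circle_root[OF unit_character_on_norm[OF \<psi> k(2)] k(1)] by blast
  have "\<psi> (g [^] j) = w ^ j" if j: "g [^] j \<in> H" for j
  proof -
    have gkq: "(g [^] k) [^] (j div k) \<in> H"
      using subgroup_nat_pow_closed[OF H k(2)] .
    have "g [^] j = (g [^] k) [^] (j div k) \<otimes> g [^] (j mod k)"
      using g by (simp add: nat_pow_pow nat_pow_mult)
    then have "g [^] (j mod k) = inv ((g [^] k) [^] (j div k)) \<otimes> g [^] j"
      using g by (simp add: m_assoc[symmetric])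
    also have "\<dots> \<in> H"
      using H gkq j by (simp add: subgroup.m_closed subgroup.m_inv_closed)
    finally have "j mod k = 0" using k_least k(1) by (meson mod_less_divisor neq0_conv)
    then have "j = k * (j div k)" using mult_div_mod_eq[of k j] by simp
    then have "g [^] j = (g [^] k) [^] (j div k)" using g by (simp add: nat_pow_pow)
    then show ?thesis
      using unit_character_on_pow[OF H \<psi> k(2)] w(2) \<open>j = k * (j div k)\<close>
      by (metis power_mult)
  qed
  with w(1) that show ?thesis by blast
qed

lemma (in comm_group) mult_times_powers:
  assumes "h1 \<in> carrier G" "h2 \<in> carrier G" "g \<in> carrier G"
  shows "(h1 \<otimes> g [^] (j1::nat)) \<otimes> (h2 \<otimes> g [^] (j2::nat)) = (h1 \<otimes> h2) \<otimes> g [^] (j1 + j2)"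
proof -
  have "(h1 \<otimes> g [^] j1) \<otimes> (h2 \<otimes> g [^] j2) = (h1 \<otimes> h2) \<otimes> (g [^] j1 \<otimes> g [^] j2)"
    using assms by (simp add: m_ac)
  then show ?thesis using assms(3) by (simp add: nat_pow_mult)
qed

lemma (in comm_group) subgroup_mult_powers:
  assumes H: "subgroup H G" and g: "g \<in> carrier G" and k: "0 < k" "g [^] (k::nat) \<in> H"
  shows "subgroup {h \<otimes> g [^] j | h j::nat. h \<in> H} G" (is "subgroup ?H' G")
proof (rule subgroupI)
  show "?H' \<subseteq> carrier G" using subgroup.subset[OF H] g by blast
  show "?H' \<noteq> {}" using subgroup.one_closed[OF H] by blast
next
  fix a b assume "a \<in> ?H'" "b \<in> ?H'"
  then obtain h1 j1 h2 j2 where a: "a = h1 \<otimes> g [^] (j1::nat)" "h1 \<in> H"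
    and b: "b = h2 \<otimes> g [^] (j2::nat)" "h2 \<in> H"
    by blast
  have "a \<otimes> b = (h1 \<otimes> h2) \<otimes> g [^] (j1 + j2)"
    unfolding a(1) b(1) using subgroup.mem_carrier[OF H] a(2) b(2) g by (simp add: mult_times_powers)
  then show "a \<otimes> b \<in> ?H'" using subgroup.m_closed[OF H a(2) b(2)] by blast
next
  fix a assume "a \<in> ?H'"
  then obtain h j where a: "a = h \<otimes> g [^] (j::nat)" "h \<in> H" by blast
  have hc: "h \<in> carrier G" using subgroup.mem_carrier[OF H a(2)] .
  have "g [^] (k - 1) \<otimes> g = g [^] k"
    using k(1) nat_pow_Suc[of g "k - 1"] by simp
  then have "(inv (g [^] k) \<otimes> g [^] (k - 1)) \<otimes> g = \<one>"
    using g by (simp add: m_assoc)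
  then have inv_g: "inv g = inv (g [^] k) \<otimes> g [^] (k - 1)"
    using g by (simp add: inv_equality)
  have "inv (g [^] j) = (inv g) [^] j"
    using g by (simp add: nat_pow_inv)
  also have "\<dots> = (inv (g [^] k)) [^] j \<otimes> (g [^] (k - 1)) [^] j"
    unfolding inv_g using g by (simp add: nat_pow_distrib)
  also have "\<dots> = inv ((g [^] k) [^] j) \<otimes> g [^] ((k - 1) * j)"
    using g by (simp add: nat_pow_inv nat_pow_pow)
  finally have "inv (g [^] j) = inv ((g [^] k) [^] j) \<otimes> g [^] ((k - 1) * j)" .
  then have "inv a = (inv h \<otimes> inv ((g [^] k) [^] j)) \<otimes> g [^] ((k - 1) * j)"
    using a(1) hc g by (simp add: inv_mult m_assoc)
  moreover have "inv h \<otimes> inv ((g [^] k) [^] j) \<in> H"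
    using H a(2) subgroup_nat_pow_closed[OF H k(2)] by (simp add: subgroup.m_closed subgroup.m_inv_closed)
  ultimately show "inv a \<in> ?H'" by blast
qed

lemma (in comm_group) unit_character_mult_powers_well_defined:
  assumes H: "subgroup H G" and \<psi>: "unit_character_on G H \<psi>" and g: "g \<in> carrier G"
    and w: "\<And>j::nat. g [^] j \<in> H \<Longrightarrow> \<psi> (g [^] j) = w ^ j"
    and "h1 \<in> H" "h2 \<in> H" "h1 \<otimes> g [^] (j1::nat) = h2 \<otimes> g [^] (j2::nat)"
  shows "\<psi> h1 * w ^ j1 = \<psi> h2 * w ^ j2"
proof -
  have oriented: "\<psi> h1 * w ^ j1 = \<psi> h2 * w ^ j2"
    if h: "h1 \<in> H" "h2 \<in> H" and eq: "h1 \<otimes> g [^] j1 = h2 \<otimes> g [^] j2" and "j2 \<le> j1"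
    for h1 h2 j1 j2
  proof -
    have c: "h1 \<in> carrier G" "h2 \<in> carrier G" using h subgroup.mem_carrier[OF H] by auto
    have "g [^] j1 = g [^] (j1 - j2) \<otimes> g [^] j2" using \<open>j2 \<le> j1\<close> g by (simp add: nat_pow_mult)
    then have "(h1 \<otimes> g [^] (j1 - j2)) \<otimes> g [^] j2 = h2 \<otimes> g [^] j2"
      using eq c g by (simp add: m_assoc)
    then have "h2 = h1 \<otimes> g [^] (j1 - j2)" using c g by (simp add: right_cancel)
    moreover have "g [^] (j1 - j2) = inv h1 \<otimes> h2"
      using calculation c g by (simp add: inv_solve_left)
    then have "g [^] (j1 - j2) \<in> H" using H h by (simp add: subgroup.m_closed subgroup.m_inv_closed)
    ultimately have "\<psi> h2 = \<psi> h1 * w ^ (j1 - j2)"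
      using unit_character_on_mult[OF \<psi> h(1)] w by simp
    then show ?thesis using \<open>j2 \<le> j1\<close> by (simp add: power_add[symmetric])
  qed
  show ?thesis
    using oriented[of h1 h2 j1 j2] oriented[of h2 h1 j2 j1] assms(5-7) by (cases "j2 \<le> j1") auto
qed

lemma (in comm_group) extend_unit_character_to_element:
  assumes H: "subgroup H G" and \<psi>: "unit_character_on G H \<psi>" and g: "g \<in> carrier G"
    and m: "0 < m" "g [^] (m::nat) \<in> H"
  obtains H' \<psi>' where "subgroup H' G" "H \<subseteq> H'" "g \<in> H'" "unit_character_on G H' \<psi>'"
    "\<And>a. a \<in> H \<Longrightarrow> \<psi>' a = \<psi> a"
proof -
  obtain w where w: "norm w = 1" "\<And>j::nat. g [^] j \<in> H \<Longrightarrow> \<psi> (g [^] j) = w ^ j"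
    using unit_character_root_at_element[OF H \<psi> g m] by blast
  define H' where "H' = {h \<otimes> g [^] j | h j::nat. h \<in> H}"
  define \<psi>' where "\<psi>' y = (let p = SOME p. fst p \<in> H \<and> y = fst p \<otimes> g [^] (snd p::nat)
    in \<psi> (fst p) * w ^ snd p)" for y
  have \<psi>'_eq: "\<psi>' (h \<otimes> g [^] j) = \<psi> h * w ^ j" if "h \<in> H" for h j
  proof -
    let ?P = "\<lambda>p. fst p \<in> H \<and> h \<otimes> g [^] j = fst p \<otimes> g [^] (snd p::nat)"
    define p where "p = (SOME p. ?P p)"
    have "?P (h, j)" using that by simp
    then have "?P p" unfolding p_def by (rule someI)
    then have "\<psi> h * w ^ j = \<psi> (fst p) * w ^ snd p"
      using unit_character_mult_powers_well_defined[OF H \<psi> g w(2) that] by blast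
    then show ?thesis unfolding \<psi>'_def Let_def p_def by simp
  qed
  have "unit_character_on G H' \<psi>'"
    unfolding unit_character_on_def
  proof (intro conjI ballI)
    fix a b assume "a \<in> H'" "b \<in> H'"
    then obtain h1 j1 h2 j2 where a: "a = h1 \<otimes> g [^] (j1::nat)" "h1 \<in> H"
      and b: "b = h2 \<otimes> g [^] (j2::nat)" "h2 \<in> H"
      unfolding H'_def by blast
    then show "\<psi>' (a \<otimes> b) = \<psi>' a * \<psi>' b"
      using subgroup.mem_carrier[OF H] g subgroup.m_closed[OF H] unit_character_on_mult[OF \<psi>]
      by (simp add: mult_times_powers \<psi>'_eq power_add)
  next
    fix a assume "a \<in> H'"
    then obtain h j where "a = h \<otimes> g [^] (j::nat)" "h \<in> H" unfolding H'_def by blast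
    then show "norm (\<psi>' a) = 1"
      using unit_character_on_norm[OF \<psi>] w(1) by (simp add: \<psi>'_eq norm_mult norm_power)
  qed
  moreover have "\<psi>' a = \<psi> a" and "a \<in> H'" if "a \<in> H" for a
  proof -
    have "a = a \<otimes> g [^] (0::nat)" using that subgroup.mem_carrier[OF H] by simp
    then show "\<psi>' a = \<psi> a" using \<psi>'_eq[OF that, of 0] by simp
    show "a \<in> H'" unfolding H'_def using that \<open>a = a \<otimes> g [^] (0::nat)\<close> by blast
  qed
  moreover have "g = \<one> \<otimes> g [^] (1::nat)" using g by simp
  then have "g \<in> H'" unfolding H'_def using subgroup.one_closed[OF H] by blast
  ultimately show ?thesis
    using that[of H' \<psi>'] subgroup_mult_powers[OF H g m, folded H'_def] by blast
qed

lemma (in comm_group) extend_unit_character_to_finite: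
  assumes "finite F" "F \<subseteq> carrier G" "subgroup H G" "unit_character_on G H \<psi>"
    and torsion: "\<And>g. g \<in> carrier G \<Longrightarrow> \<exists>m>0. g [^] (m::nat) \<in> H"
  obtains H' \<psi>' where "subgroup H' G" "H \<subseteq> H'" "F \<subseteq> H'" "unit_character_on G H' \<psi>'"
    "\<And>a. a \<in> H \<Longrightarrow> \<psi>' a = \<psi> a"
proof -
  from assms(1,2) have "\<exists>H' \<psi>'. subgroup H' G \<and> H \<subseteq> H' \<and> F \<subseteq> H' \<and> unit_character_on G H' \<psi>'
    \<and> (\<forall>a\<in>H. \<psi>' a = \<psi> a)"
  proof (induction F)
    case empty
    show ?case using assms(3,4) by blast
  next
    case (insert g F)
    then obtain H1 \<psi>1 where H1: "subgroup H1 G" "H \<subseteq> H1" "F \<subseteq> H1" "unit_character_on G H1 \<psi>1"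
      "\<forall>a\<in>H. \<psi>1 a = \<psi> a"
      by auto
    obtain m where "0 < m" "g [^] (m::nat) \<in> H1" using torsion insert.prems H1(2) by blast
    then obtain H2 \<psi>2 where "subgroup H2 G" "H1 \<subseteq> H2" "g \<in> H2" "unit_character_on G H2 \<psi>2"
      "\<And>a. a \<in> H1 \<Longrightarrow> \<psi>2 a = \<psi>1 a"
      using extend_unit_character_to_element[OF H1(1,4)] insert.prems by blast
    with H1 show ?case by (intro exI[of _ H2] exI[of _ \<psi>2]) auto
  qed
  then show ?thesis using that by blast
qed

lemma topological_group_translation_continuous:
  assumes "topological_group G T" "a \<in> carrier G"
  shows "continuous_map T T (\<lambda>y. a \<otimes>\<^bsub>G\<^esub> y)"
proof -
  have "continuous_map T (prod_topology T T) (\<lambda>y. (a, y))"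
    using assms unfolding topological_group_def by (intro continuous_map_pairedI) auto
  then show ?thesis
    using continuous_map_compose assms(1) unfolding topological_group_def o_def by fastforce
qed

lemma topological_group_pow_continuous:
  assumes "topological_group G T"
  shows "continuous_map T T (\<lambda>y. y [^]\<^bsub>G\<^esub> (n::nat))"
proof (induction n)
  case 0
  then show ?case
    using assms unfolding topological_group_def by (simp add: group.is_monoid monoid.one_closed)
next
  case (Suc n)
  have "continuous_map T (prod_topology T T) (\<lambda>y. (y [^]\<^bsub>G\<^esub> n, y))"
    using Suc by (intro continuous_map_pairedI) auto
  then have "continuous_map T T (\<lambda>y. y [^]\<^bsub>G\<^esub> n \<otimes>\<^bsub>G\<^esub> y)"
    using continuous_map_compose assms unfolding topological_group_def o_def by fastforce
  moreover have "monoid G" using assms unfolding topological_group_def by (simp add: group.is_monoid)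
  ultimately show ?case by (simp add: monoid.nat_pow_Suc)
qed

lemma topological_group_openin_translate:
  assumes "topological_group G T" "openin T V" "a \<in> carrier G"
  shows "openin T {y \<in> carrier G. inv\<^bsub>G\<^esub> a \<otimes>\<^bsub>G\<^esub> y \<in> V}"
proof -
  have "group G" "topspace T = carrier G" using assms(1) unfolding topological_group_def by auto
  then show ?thesis
    using openin_continuous_map_preimage[OF topological_group_translation_continuous[OF assms(1)
        group.inv_closed[OF _ assms(3)]] assms(2)] by simp
qed

lemma compact_group_finite_translates:
  fixes G (structure)
  assumes G: "topological_group G T" and "compact_space T" "openin T V" "subgroup V G"
  obtains F where "finite F" "F \<subseteq> carrier G" "\<And>y. y \<in> carrier G \<Longrightarrow> \<exists>f\<in>F. inv\<^bsub>G\<^esub> f \<otimes>\<^bsub>G\<^esub> y \<in> V"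
proof -
  interpret group G using G unfolding topological_group_def by simp
  define U where "U a = {y \<in> carrier G. inv a \<otimes> y \<in> V}" for a
  have "compactin T (carrier G)"
    using \<open>compact_space T\<close> G unfolding compact_space_def topological_group_def by simp
  moreover have "openin T C" if "C \<in> U ` carrier G" for C
    using that topological_group_openin_translate[OF G assms(3)] unfolding U_def by blast
  moreover have "carrier G \<subseteq> \<Union> (U ` carrier G)"
    unfolding U_def using subgroup.one_closed[OF assms(4)] by force
  ultimately obtain \<F> where "finite \<F>" "\<F> \<subseteq> U ` carrier G" "carrier G \<subseteq> \<Union> \<F>"
    using compactinD[of T "carrier G" "U ` carrier G"] by blast
  then obtain F where "finite F" "F \<subseteq> carrier G" "carrier G \<subseteq> \<Union> (U ` F)"
    using finite_subset_image[of \<F> U "carrier G"] by blast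
  moreover have "\<exists>f\<in>F. inv f \<otimes> y \<in> V" if "y \<in> carrier G" for y
    using that \<open>carrier G \<subseteq> \<Union> (U ` F)\<close> unfolding U_def by blast
  ultimately show ?thesis using that by blast
qed

lemma continuous_character_if_trivial_on_open_subgroup:
  fixes G (structure)
  assumes G: "topological_group G T" and c: "unit_character_on G (carrier G) c"
    and "openin T V" "subgroup V G" and trivial: "\<And>v. v \<in> V \<Longrightarrow> c v = 1"
  shows "continuous_character G T c"
proof -
  interpret group G using G unfolding topological_group_def by simp
  have T: "topspace T = carrier G" using G unfolding topological_group_def by simp
  have "openin T {y \<in> topspace T. c y \<in> W}" for W
  proof (subst openin_subopen, intro ballI)
    fix a assume a: "a \<in> {y \<in> topspace T. c y \<in> W}"
    then have "a \<in> carrier G" using T by simp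
    have "c y = c a" if "y \<in> carrier G" "inv a \<otimes> y \<in> V" for y
    proof -
      have "c y = c (a \<otimes> (inv a \<otimes> y))"
        using that \<open>a \<in> carrier G\<close> by (simp add: m_assoc[symmetric])
      also have "\<dots> = c a * c (inv a \<otimes> y)"
        using unit_character_on_mult[OF c] that \<open>a \<in> carrier G\<close> by simp
      finally show ?thesis using trivial[OF that(2)] by simp
    qed
    then have "{y \<in> carrier G. inv a \<otimes> y \<in> V} \<subseteq> {y \<in> topspace T. c y \<in> W}"
      using a T by auto
    moreover have "a \<in> {y \<in> carrier G. inv a \<otimes> y \<in> V}"
      using \<open>a \<in> carrier G\<close> subgroup.one_closed[OF assms(4)] by simp
    ultimately show "\<exists>U. openin T U \<and> a \<in> U \<and> U \<subseteq> {y \<in> topspace T. c y \<in> W}"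
      using topological_group_openin_translate[OF G assms(3) \<open>a \<in> carrier G\<close>] by blast
  qed
  moreover have "c \<in> topspace T \<rightarrow> sphere 0 1"
    using unit_character_on_norm[OF c] T by auto
  ultimately show ?thesis
    unfolding continuous_character_def continuous_map_def
    using unit_character_on_mult[OF c] by auto
qed

lemma extend_unit_character_compact:
  fixes G (structure)
  assumes G: "topological_group G T" "comm_group G" "compact_space T"
    and H: "subgroup H G" "unit_character_on G H \<psi>"
    and V: "openin T V" "subgroup V G" "V \<subseteq> H" "\<And>v. v \<in> V \<Longrightarrow> \<psi> v = 1"
    and torsion: "\<And>g. g \<in> carrier G \<Longrightarrow> \<exists>m>0. g [^]\<^bsub>G\<^esub> (m::nat) \<in> H"
  obtains c where "continuous_character G T c" "\<And>a. a \<in> H \<Longrightarrow> c a = \<psi> a"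
proof -
  interpret comm_group G by (fact G(2))
  obtain F where F: "finite F" "F \<subseteq> carrier G" "\<And>y. y \<in> carrier G \<Longrightarrow> \<exists>f\<in>F. inv f \<otimes> y \<in> V"
    using compact_group_finite_translates[OF G(1,3) V(1,2)] by blast
  obtain H' c where H': "subgroup H' G" "H \<subseteq> H'" "F \<subseteq> H'" "unit_character_on G H' c"
    and extends: "\<And>a. a \<in> H \<Longrightarrow> c a = \<psi> a"
    using extend_unit_character_to_finite[OF F(1,2) H torsion] by blast
  have "carrier G \<subseteq> H'"
  proof
    fix y assume y: "y \<in> carrier G"
    then obtain f where f: "f \<in> F" "inv f \<otimes> y \<in> V" using F(3) by blast
    have "f \<in> H'" "inv f \<otimes> y \<in> H'" using f H'(2,3) V(3) by auto
    then have "f \<otimes> (inv f \<otimes> y) \<in> H'" by (rule subgroup.m_closed[OF H'(1)])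
    moreover have "f \<otimes> (inv f \<otimes> y) = y" using f F(2) y by (auto simp: m_assoc[symmetric])
    ultimately show "y \<in> H'" by simp
  qed
  then have "H' = carrier G" using subgroup.subset[OF H'(1)] by blast
  then have "continuous_character G T c"
    using continuous_character_if_trivial_on_open_subgroup[OF G(1) _ V(1,2), of c] H'(4) extends V(3,4)
    by (simp add: subset_iff)
  with extends that show ?thesis by blast
qed

lemma mem_carrier_Tl_group:
  "f \<in> carrier (Tl_group l) \<longleftrightarrow> (\<forall>k. 0 \<le> f k \<and> f k < int l ^ k)"
  unfolding Tl_group_def by (simp add: PiE_UNIV_domain Pi_iff)

lemma Tl_group_mult: "f \<otimes>\<^bsub>Tl_group l\<^esub> g = (\<lambda>k. (f k + g k) mod int l ^ k)"
  unfolding Tl_group_def by simp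

lemma Tl_group_one: "\<one>\<^bsub>Tl_group l\<^esub> = (\<lambda>k. 0)"
  unfolding Tl_group_def by simp

lemma Tl_group_comm_group:
  assumes "0 < l"
  shows "comm_group (Tl_group l)"
proof -
  have pos: "0 < int l ^ k" for k using assms by simp
  have inverse: "(\<lambda>k. (- f k) mod int l ^ k) \<in> carrier (Tl_group l) \<and>
      (\<lambda>k. (- f k) mod int l ^ k) \<otimes>\<^bsub>Tl_group l\<^esub> f = \<one>\<^bsub>Tl_group l\<^esub>" for f
    using pos by (simp add: mem_carrier_Tl_group Tl_group_one Tl_group_mult mod_add_left_eq)
  show ?thesis
  proof (rule comm_groupI)
    fix f g h
    show "f \<otimes>\<^bsub>Tl_group l\<^esub> g \<otimes>\<^bsub>Tl_group l\<^esub> h = f \<otimes>\<^bsub>Tl_group l\<^esub> (g \<otimes>\<^bsub>Tl_group l\<^esub> h)"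
      by (simp add: Tl_group_mult mod_add_left_eq mod_add_right_eq add.assoc)
    show "f \<otimes>\<^bsub>Tl_group l\<^esub> g \<in> carrier (Tl_group l)"
      using pos by (simp add: Tl_group_mult mem_carrier_Tl_group)
    show "f \<otimes>\<^bsub>Tl_group l\<^esub> g = g \<otimes>\<^bsub>Tl_group l\<^esub> f"
      by (simp add: Tl_group_mult add.commute)
  next
    show "\<one>\<^bsub>Tl_group l\<^esub> \<in> carrier (Tl_group l)"
      using pos by (simp add: Tl_group_one mem_carrier_Tl_group)
  next
    fix f assume "f \<in> carrier (Tl_group l)"
    then show "\<one>\<^bsub>Tl_group l\<^esub> \<otimes>\<^bsub>Tl_group l\<^esub> f = f"
      by (simp add: Tl_group_one Tl_group_mult mem_carrier_Tl_group)
    show "\<exists>g\<in>carrier (Tl_group l). g \<otimes>\<^bsub>Tl_group l\<^esub> f = \<one>\<^bsub>Tl_group l\<^esub>"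
      using inverse by blast
  qed
qed

lemma topspace_Tl_top: "topspace (Tl_top l) = carrier (Tl_group l)"
  unfolding Tl_top_def Tl_group_def by simp

lemma compact_space_Tl_top: "compact_space (Tl_top l)"
  unfolding Tl_top_def by (simp add: compact_space_product_topology compact_space_discrete_topology)

definition Tl_level :: "nat \<Rightarrow> nat \<Rightarrow> (nat \<Rightarrow> int) set" where
  "Tl_level l K = {f \<in> carrier (Tl_group l). \<forall>k<K. f k = 0}"

lemma decseq_Tl_level: "decseq (Tl_level l)"
  unfolding Tl_level_def by (rule decseq_SucI) auto

lemma Inter_Tl_level:
  assumes "0 < l"
  shows "(\<Inter>K. Tl_level l K) = {\<one>\<^bsub>Tl_group l\<^esub>}"
proof -
  have "\<one>\<^bsub>Tl_group l\<^esub> \<in> carrier (Tl_group l)"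
    using Tl_group_comm_group[OF assms] by (simp add: comm_group_def group.is_monoid monoid.one_closed)
  then show ?thesis
    unfolding Tl_level_def Tl_group_one by (auto simp: fun_eq_iff dest: spec[of _ "Suc _"])
qed

lemma subgroup_Tl_level:
  assumes "0 < l"
  shows "subgroup (Tl_level l K) (Tl_group l)"
proof -
  interpret comm_group "Tl_group l" using Tl_group_comm_group[OF assms] .
  show ?thesis
  proof (rule subgroupI)
    show "Tl_level l K \<subseteq> carrier (Tl_group l)" unfolding Tl_level_def by blast
    show "Tl_level l K \<noteq> {}" unfolding Tl_level_def by (auto simp: Tl_group_one)
  next
    fix f g assume f: "f \<in> Tl_level l K" and g: "g \<in> Tl_level l K"
    then have "f \<otimes>\<^bsub>Tl_group l\<^esub> g \<in> carrier (Tl_group l)" unfolding Tl_level_def by simp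
    with f g show "f \<otimes>\<^bsub>Tl_group l\<^esub> g \<in> Tl_level l K"
      unfolding Tl_level_def by (simp add: Tl_group_mult)
  next
    fix f assume f: "f \<in> Tl_level l K"
    then have "f \<in> carrier (Tl_group l)" unfolding Tl_level_def by blast
    then have inv: "inv\<^bsub>Tl_group l\<^esub> f \<in> carrier (Tl_group l)"
      and sum: "(f k + (inv\<^bsub>Tl_group l\<^esub> f) k) mod int l ^ k = 0" for k
      using r_inv[of f] by (simp_all add: Tl_group_mult Tl_group_one fun_eq_iff)
    have "(inv\<^bsub>Tl_group l\<^esub> f) k = 0" if "k < K" for k
    proof -
      have "(inv\<^bsub>Tl_group l\<^esub> f) k mod int l ^ k = 0" using sum[of k] f that unfolding Tl_level_def by simp
      then show ?thesis using inv unfolding mem_carrier_Tl_group by (simp add: mod_pos_pos_trivial)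
    qed
    with inv show "inv\<^bsub>Tl_group l\<^esub> f \<in> Tl_level l K" unfolding Tl_level_def by blast
  qed
qed

lemma Tl_level_clopen:
  assumes "0 < l"
  shows "openin (Tl_top l) (Tl_level l K) \<and> closedin (Tl_top l) (Tl_level l K)"
proof (induction K)
  case 0
  then show ?case unfolding Tl_level_def by (simp flip: topspace_Tl_top)
next
  case (Suc K)
  have proj: "continuous_map (Tl_top l) (discrete_topology {0..<int l ^ K}) (\<lambda>f. f K)"
    unfolding Tl_top_def by (rule continuous_map_product_projection) simp
  have "{0} \<subseteq> {0..<int l ^ K}" using assms by simp
  then have "openin (Tl_top l) {f \<in> topspace (Tl_top l). f K \<in> {0}}"
    and "closedin (Tl_top l) {f \<in> topspace (Tl_top l). f K \<in> {0}}"
    by (intro openin_continuous_map_preimage[OF proj] closedin_continuous_map_preimage[OF proj], simp)+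
  moreover have "Tl_level l (Suc K) = Tl_level l K \<inter> {f \<in> topspace (Tl_top l). f K \<in> {0}}"
    unfolding Tl_level_def topspace_Tl_top using less_Suc_eq by auto
  ultimately show ?case using Suc by auto
qed

lemma compact_embedding_image_clopen:
  assumes "compact_space TX" "Hausdorff_space TY" "continuous_map TX TY f" "inj_on f (topspace TX)"
    and "openin TY (f ` topspace TX)" and S: "openin TX S" "closedin TX S"
  shows "openin TY (f ` S) \<and> closedin TY (f ` S)"
proof -
  have closed_image: "closedin TY (f ` C)" if "closedin TX C" for C
    using compactin_imp_closedin[OF assms(2) image_compactin[OF closedin_compact_space[OF assms(1) that]]]
      assms(3) .
  have "f ` S = f ` topspace TX - f ` (topspace TX - S)"
    using assms(4) openin_subset[OF S(1)] by (auto simp: inj_on_def)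
  moreover have "closedin TY (f ` (topspace TX - S))" using closed_image S(1) by blast
  ultimately show ?thesis using assms(5) closed_image[OF S(2)] by (simp add: openin_diff)
qed

lemma compact_space_decseq_forces_value:
  assumes "compact_space TX" "continuous_map TX TY p" "continuous_map TX (discrete_topology Z) q"
    and "\<And>K. closedin TY (V K)" "decseq V"
    and forces: "\<And>x. x \<in> topspace TX \<Longrightarrow> (\<forall>K. p x \<in> V K) \<Longrightarrow> q x = z"
  shows "\<exists>K. \<forall>x\<in>topspace TX. p x \<in> V K \<longrightarrow> q x = z"
proof (rule ccontr)
  define S where "S K = {x \<in> topspace TX. p x \<in> V K} \<inter> {x \<in> topspace TX. q x \<in> Z - {z}}" for K
  assume contra: "\<not> ?thesis"
  have nonempty: "S K \<noteq> {}" for K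
  proof -
    obtain x where x: "x \<in> topspace TX" "p x \<in> V K" "q x \<noteq> z" using contra by blast
    moreover have "q x \<in> Z" using assms(3) x(1) by (auto simp: continuous_map_def)
    ultimately have "x \<in> S K" unfolding S_def by simp
    then show ?thesis by blast
  qed
  have closed: "closedin TX (S K)" for K
    unfolding S_def using assms(2-4)
    by (intro closedin_Int closedin_continuous_map_preimage) auto
  have "decseq S"
    using decseq_SucD[OF \<open>decseq V\<close>] unfolding S_def by (intro decseq_SucI) auto
  with compact_space_imp_nest[of TX S, OF assms(1) closed nonempty] obtain x where "x \<in> (\<Inter>K. S K)"
    by blast
  then have "x \<in> topspace TX" "\<forall>K. p x \<in> V K" "q x \<noteq> z" unfolding S_def by auto
  then show False using forces by blast
qed

lemma (in comm_group) subgroup_nat_pow_image: "subgroup ((\<lambda>d. d [^] (m::nat)) ` carrier G) G"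
proof -
  have "group_hom G G (\<lambda>d. d [^] m)"
    by unfold_locales (auto simp: hom_def nat_pow_distrib)
  then show ?thesis by (rule group_hom.img_is_subgroup)
qed

lemma (in comm_group) nat_pow_mult_eq_imp_image_eq:
  assumes V: "subgroup V G" and A: "group A" and \<pi>: "\<pi> \<in> hom G A"
    and kills: "\<And>u. u \<in> carrier G \<Longrightarrow> u [^] (m::nat) \<in> V \<Longrightarrow> \<pi> u = \<one>\<^bsub>A\<^esub>"
    and d: "d \<in> carrier G" "d' \<in> carrier G" and v: "v \<in> V" "v' \<in> V"
    and eq: "d [^] m \<otimes> v = d' [^] m \<otimes> v'"
  shows "\<pi> d = \<pi> d'"
proof -
  define u where "u = d \<otimes> inv d'"
  have u: "u \<in> carrier G" "d = u \<otimes> d'" unfolding u_def using d by (auto simp: m_assoc)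
  have vc: "v \<in> carrier G" "v' \<in> carrier G" using v subgroup.mem_carrier[OF V] by auto
  have "d' [^] m \<otimes> (u [^] m \<otimes> v) = d' [^] m \<otimes> v'"
    using eq u d vc by (simp add: nat_pow_distrib m_ac)
  then have "u [^] m \<otimes> v = v'" using u d vc by simp
  then have "u [^] m = v' \<otimes> inv v" using u vc by (simp add: inv_solve_right)
  then have "u [^] m \<in> V" using V v by (simp add: subgroup.m_closed subgroup.m_inv_closed)
  then have "\<pi> u = \<one>\<^bsub>A\<^esub>" using kills u(1) by blast
  then show ?thesis
    using u d hom_mult[OF \<pi>] hom_in_carrier[OF \<pi>] group.is_monoid[OF A] by (simp add: monoid.l_one)
qed

lemma (in comm_group) unit_character_on_nat_pow_image_mult:
  assumes V: "subgroup V G" and A: "group A" and \<pi>: "\<pi> \<in> hom G A"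
    and \<theta>: "unit_character_on A (carrier A) \<theta>"
    and kills: "\<And>u. u \<in> carrier G \<Longrightarrow> u [^] (m::nat) \<in> V \<Longrightarrow> \<pi> u = \<one>\<^bsub>A\<^esub>"
  obtains \<psi> where "unit_character_on G ((\<lambda>d. d [^] m) ` carrier G <#> V) \<psi>"
    "\<And>d v. d \<in> carrier G \<Longrightarrow> v \<in> V \<Longrightarrow> \<psi> (d [^] m \<otimes> v) = \<theta> (\<pi> d)"
proof -
  define \<psi> where "\<psi> y = \<theta> (\<pi> (SOME d. d \<in> carrier G \<and> (\<exists>v\<in>V. y = d [^] m \<otimes> v)))" for y
  have \<psi>_eq: "\<psi> (d [^] m \<otimes> v) = \<theta> (\<pi> d)" if "d \<in> carrier G" "v \<in> V" for d v
  proof -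
    let ?P = "\<lambda>d'. d' \<in> carrier G \<and> (\<exists>v'\<in>V. d [^] m \<otimes> v = d' [^] m \<otimes> v')"
    have "?P d" using that by blast
    then have "?P (SOME d'. ?P d')" by (rule someI)
    then have "\<pi> d = \<pi> (SOME d'. ?P d')"
      using nat_pow_mult_eq_imp_image_eq[OF V A \<pi> kills] that by blast
    then show ?thesis unfolding \<psi>_def by simp
  qed
  have "unit_character_on G ((\<lambda>d. d [^] m) ` carrier G <#> V) \<psi>"
    unfolding unit_character_on_def
  proof (intro conjI ballI)
    fix a b assume "a \<in> (\<lambda>d. d [^] m) ` carrier G <#> V" "b \<in> (\<lambda>d. d [^] m) ` carrier G <#> V"
    then obtain d v d' v' where a: "a = d [^] m \<otimes> v" "d \<in> carrier G" "v \<in> V"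
      and b: "b = d' [^] m \<otimes> v'" "d' \<in> carrier G" "v' \<in> V"
      unfolding set_mult_def by blast
    then have "a \<otimes> b = (d \<otimes> d') [^] m \<otimes> (v \<otimes> v')"
      using subgroup.mem_carrier[OF V] by (simp add: nat_pow_distrib m_ac)
    moreover have "v \<otimes> v' \<in> V" using subgroup.m_closed[OF V] a b by blast
    ultimately show "\<psi> (a \<otimes> b) = \<psi> a * \<psi> b"
      using a b \<psi>_eq hom_mult[OF \<pi>] hom_in_carrier[OF \<pi>] unit_character_on_mult[OF \<theta>] by simp
  next
    fix a assume "a \<in> (\<lambda>d. d [^] m) ` carrier G <#> V"
    then obtain d v where "a = d [^] m \<otimes> v" "d \<in> carrier G" "v \<in> V"
      unfolding set_mult_def by blast
    then show "norm (\<psi> a) = 1" using \<psi>_eq hom_in_carrier[OF \<pi>] unit_character_on_norm[OF \<theta>] by simp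
  qed
  with \<psi>_eq that show ?thesis by blast
qed

lemma exists_open_subgroup_killing_powers:
  fixes D (structure)
  assumes l: "0 < l"
    and D: "topological_group D TD" "comm_group D" "compact_space TD" "Hausdorff_space TD"
    and \<iota>: "\<iota> \<in> hom (Tl_group l) D" "inj_on \<iota> (carrier (Tl_group l))" "continuous_map (Tl_top l) TD \<iota>"
    and A: "group A" and \<pi>: "\<pi> \<in> hom D A" "continuous_map TD (discrete_topology (carrier A)) \<pi>"
    and kernel: "\<iota> ` carrier (Tl_group l) = {d \<in> carrier D. \<pi> d = \<one>\<^bsub>A\<^esub>}"
    and torsion: "TD closure_of {d \<in> carrier D. \<exists>k::nat. k > 0 \<and> d [^] k = \<one>} = \<iota> ` carrier (Tl_group l)"
    and m: "0 < m"
  obtains V where "subgroup V D" "openin TD V" "\<And>d. d \<in> carrier D \<Longrightarrow> d [^] (m::nat) \<in> V \<Longrightarrow> \<pi> d = \<one>\<^bsub>A\<^esub>"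
proof -
  interpret comm_group D by (fact D(2))
  have TD: "topspace TD = carrier D" using D(1) unfolding topological_group_def by simp
  interpret \<iota>: group_hom "Tl_group l" D \<iota>
    using \<iota>(1) Tl_group_comm_group[OF l] by (simp add: group_hom_def group_hom_axioms_def comm_group_def)
  define V where "V K = \<iota> ` Tl_level l K" for K
  have "openin TD {d \<in> topspace TD. \<pi> d \<in> {\<one>\<^bsub>A\<^esub>}}"
    by (rule openin_continuous_map_preimage[OF \<pi>(2)]) (simp add: A group.is_monoid monoid.one_closed)
  then have "openin TD (\<iota> ` topspace (Tl_top l))" using kernel TD by (simp add: topspace_Tl_top)
  then have V_clopen: "openin TD (V K) \<and> closedin TD (V K)" for K
    unfolding V_def using compact_embedding_image_clopen[OF compact_space_Tl_top D(4) \<iota>(3)]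
      \<iota>(2) Tl_level_clopen[OF l] by (simp add: topspace_Tl_top)
  have "decseq V" using decseq_Tl_level unfolding V_def decseq_def by (simp add: image_mono)
  moreover have "\<pi> d = \<one>\<^bsub>A\<^esub>" if "d \<in> carrier D" "\<forall>K. d [^] m \<in> V K" for d
  proof -
    have "(\<Inter>K. V K) = \<iota> ` (\<Inter>K. Tl_level l K)"
      unfolding V_def using \<iota>(2) by (intro image_INT[symmetric]) (auto simp: Tl_level_def)
    then have "(\<Inter>K. V K) = {\<one>}" using Inter_Tl_level[OF l] by simp
    then have "d [^] m = \<one>" using that(2) by blast
    then have "d \<in> {d \<in> carrier D. \<exists>k::nat. k > 0 \<and> d [^] k = \<one>}" using that m by blast
    moreover have "{d \<in> carrier D. \<exists>k::nat. k > 0 \<and> d [^] k = \<one>} \<subseteq> \<iota> ` carrier (Tl_group l)"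
      unfolding torsion[symmetric] by (rule closure_of_subset) (auto simp: TD)
    ultimately have "d \<in> \<iota> ` carrier (Tl_group l)" by blast
    then show ?thesis using kernel by simp
  qed
  ultimately obtain K where "\<forall>d\<in>carrier D. d [^] m \<in> V K \<longrightarrow> \<pi> d = \<one>\<^bsub>A\<^esub>"
    using compact_space_decseq_forces_value[OF D(3) topological_group_pow_continuous[OF D(1)] \<pi>(2)]
      V_clopen TD by metis
  moreover have "subgroup (V K) D"
    unfolding V_def by (rule \<iota>.subgroup_img_is_subgroup[OF subgroup_Tl_level[OF l]])
  ultimately show ?thesis using that V_clopen by blast
qed

lemma continuous_character_root_of_pullback:
  fixes D (structure)
  assumes D: "topological_group D TD" "comm_group D" "compact_space TD"
    and A: "group A" and \<pi>: "\<pi> \<in> hom D A" and \<theta>: "unit_character_on A (carrier A) \<theta>"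
    and V: "subgroup V D" "openin TD V" and m: "0 < m"
    and kills: "\<And>d. d \<in> carrier D \<Longrightarrow> d [^] (m::nat) \<in> V \<Longrightarrow> \<pi> d = \<one>\<^bsub>A\<^esub>"
  obtains c where "continuous_character D TD c" "\<And>d. d \<in> carrier D \<Longrightarrow> c d ^ m = \<theta> (\<pi> d)"
proof -
  interpret comm_group D by (fact D(2))
  define H where "H = (\<lambda>d. d [^] m) ` carrier D <#> V"
  obtain \<psi> where \<psi>: "unit_character_on D H \<psi>"
    and \<psi>_eq: "\<And>d v. d \<in> carrier D \<Longrightarrow> v \<in> V \<Longrightarrow> \<psi> (d [^] m \<otimes> v) = \<theta> (\<pi> d)"
    using unit_character_on_nat_pow_image_mult[OF V(1) A \<pi> \<theta> kills] unfolding H_def by blast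
  have H_mem: "d [^] m \<otimes> v \<in> H" if "d \<in> carrier D" "v \<in> V" for d v
    unfolding H_def set_mult_def using that by blast
  have "subgroup H D"
    unfolding H_def by (rule mult_subgroups[OF subgroup_nat_pow_image V(1)])
  moreover have "V \<subseteq> H" and "\<And>v. v \<in> V \<Longrightarrow> \<psi> v = 1"
    using H_mem[of \<one>] \<psi>_eq[of \<one>] subgroup.mem_carrier[OF V(1)]
      hom_one[OF \<pi> is_group A] group.unit_character_on_one[OF A group.subgroup_self[OF A] \<theta>]
    by auto
  moreover have pow_H: "d [^] m \<in> H" and pow_\<psi>: "\<psi> (d [^] m) = \<theta> (\<pi> d)" if "d \<in> carrier D" for d
    using H_mem[of d \<one>] \<psi>_eq[of d \<one>] subgroup.one_closed[OF V(1)] that by auto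
  ultimately obtain c where c: "continuous_character D TD c" "\<And>a. a \<in> H \<Longrightarrow> c a = \<psi> a"
    using extend_unit_character_compact[OF D(1,2,3) _ \<psi> V(2,1)] m by blast
  have "unit_character_on D (carrier D) c"
    using unit_character_on_carrier_if_continuous_character[OF c(1)] D(1)
    unfolding topological_group_def by simp
  then have "c d ^ m = \<theta> (\<pi> d)" if "d \<in> carrier D" for d
    using unit_character_on_pow[OF subgroup_self _ that, of c m] c(2) pow_H pow_\<psi> that by simp
  with c(1) that show ?thesis by blast
qed

theorem lemma1:
  fixes l :: nat and n :: nat
    and D :: "('d, 'e) monoid_scheme" and TD :: "'d topology"
    and A :: "('a, 'c) monoid_scheme"
    and \<iota> :: "(nat \<Rightarrow> int) \<Rightarrow> 'd" and \<pi> :: "'d \<Rightarrow> 'a"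
    and x :: "'a \<Rightarrow> complex"
  assumes "Factorial_Ring.prime l"
    and "comm_group A" and "finite (carrier A)" and "\<exists>m. card (carrier A) = l ^ m"
    and "comm_group D" and "pro_l_group l D TD"
    and "\<iota> \<in> hom (Tl_group l) D" and "inj_on \<iota> (carrier (Tl_group l))"
    and "continuous_map (Tl_top l) TD \<iota>"
    and "\<pi> \<in> hom D A" and "\<pi> ` carrier D = carrier A"
    and "continuous_map TD (discrete_topology (carrier A)) \<pi>"
    and "\<iota> ` carrier (Tl_group l) = {d \<in> carrier D. \<pi> d = \<one>\<^bsub>A\<^esub>}"
    and "TD closure_of {d \<in> carrier D. \<exists>k::nat. k > 0 \<and> d [^]\<^bsub>D\<^esub> k = \<one>\<^bsub>D\<^esub>}
           = \<iota> ` carrier (Tl_group l)"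
    and "continuous_character A (discrete_topology (carrier A)) x"
    and "\<exists>a\<in>carrier A. x a \<noteq> 1"
  shows "\<exists>c. continuous_character D TD c \<and> (\<forall>d\<in>carrier D. c d ^ (l ^ n) = x (\<pi> d))"
proof -
  interpret A: comm_group A by fact
  have "0 < l" using assms(1) by (simp add: prime_gt_0_nat)
  then have "0 < l ^ n" by simp
  have D: "topological_group D TD" "compact_space TD" "Hausdorff_space TD"
    using assms(6) unfolding pro_l_group_def by auto
  obtain V where "subgroup V D" "openin TD V"
    and "\<And>d. d \<in> carrier D \<Longrightarrow> d [^]\<^bsub>D\<^esub> (l ^ n) \<in> V \<Longrightarrow> \<pi> d = \<one>\<^bsub>A\<^esub>"
    using exists_open_subgroup_killing_powers[OF \<open>0 < l\<close> D(1) assms(5) D(2,3) assms(7-9)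
        A.is_group assms(10,12-14) \<open>0 < l ^ n\<close>] by blast
  moreover have "unit_character_on A (carrier A) x"
    using unit_character_on_carrier_if_continuous_character[OF assms(15)] by simp
  ultimately obtain c where "continuous_character D TD c" "\<And>d. d \<in> carrier D \<Longrightarrow> c d ^ (l ^ n) = x (\<pi> d)"
    using continuous_character_root_of_pullback[OF D(1) assms(5) D(2) A.is_group assms(10)]
      \<open>0 < l ^ n\<close> by blast
  then show ?thesis by blast
qed

end
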